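(* Let $(X_n)_{n\ge1}$ be real random variables for which there exist constants $C_0\ge0$, $C_1,C_2>0$, $\beta\in(0,1)$ and $\gamma\in(0,1/\beta)$ such that for all $x>0$ and all $n\ge1$, $$\Pr\big(X_n\ge C_0n^{-\beta}+x\big)\le C_1\exp(-C_2\,n\,x^\gamma).$$ Let $\delta\in(\beta,\min(\gamma^{-1},1))$ and $\alpha:=\gamma(1-\delta)/\{\gamma(1-\delta)+(1-\gamma\delta)\}$. Then there exists a constant $C_4>0$ depending only on $C_0,C_1,C_2,\beta,\gamma,\delta$ such that for every $n\ge1$ and every $y\ge1$, $$\Pr\Big(\bar X_n\ge \frac{C_0}{1-\beta}n^{-\beta}+\frac{3}{1-\delta}n^{-\delta}y\Big)\le C_4\,n^{\alpha}\exp\big\{-C_2\,n^{\alpha(1-\gamma\delta)}y^\gamma\big\},$$ where $\bar X_n:=\frac1n\sum_{i=1}^n X_i$. *)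

theory Defs
  imports "HOL-Probability.Probability"
begin

definition sample_mean :: "(nat \<Rightarrow> 'a \<Rightarrow> real) \<Rightarrow> nat \<Rightarrow> 'a \<Rightarrow> real" where
  "sample_mean X n \<omega> = (\<Sum>i=1..n. X i \<omega>) / real n"

end

theory Submission
  imports Defs "HOL-Real_Asymp.Real_Asymp"
begin

text \<open>
  Union bound with index-dependent thresholds \<open>x\<^sub>i\<close>: if every \<open>X\<^sub>i\<close> stays below
  \<open>C0 i^(-\<beta>) + x\<^sub>i\<close>, the sample mean stays below the target level as soon as
  \<open>\<Sum> x\<^sub>i \<le> 3 n^(1-\<delta>) y / (1-\<delta>)\<close>. Take \<open>x\<^sub>i = s i^(-\<delta>) y\<close> for \<open>i \<le> m = \<lfloor>n^\<alpha>\<rfloor>\<close> and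
  \<open>x\<^sub>i = 2 i^(-\<delta>) y\<close> beyond, with \<open>s = n^(\<alpha>(1-\<gamma>\<delta>)/\<gamma>)\<close>: the defining relation of \<open>\<alpha>\<close> is
  exactly what makes \<open>s m^(1-\<delta>) \<le> n^(1-\<delta>)\<close>, so these thresholds are affordable. Each of the
  first \<open>m\<close> tail events has probability at most \<open>C1 exp(-C2 n^(\<alpha>(1-\<gamma>\<delta>)) y^\<gamma>)\<close>, and for
  \<open>i > m\<close>, where \<open>i^(1-\<gamma>\<delta>) \<ge> n^(\<alpha>(1-\<gamma>\<delta>))\<close>, the factor \<open>2^\<gamma> > 1\<close> leaves besides this common
  factor a summable term \<open>exp(-C2 (2^\<gamma>-1) i^(1-\<gamma>\<delta>))\<close>.
\<close>

lemma powr_one_minus_increment_ge: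
  fixes r x :: real
  assumes "0 \<le> r" "r < 1" "x > 0"
  shows "(1 - r) * (x + 1) powr (-r) \<le> (x + 1) powr (1 - r) - x powr (1 - r)"
proof -
  have "\<exists>z. x < z \<and> z < x + 1 \<and>
      (x + 1) powr (1 - r) - x powr (1 - r) = (x + 1 - x) * ((1 - r) * z powr (1 - r - 1))"
    by (rule MVT2) (use assms in \<open>auto intro!: derivative_eq_intros\<close>)
  then obtain z where z: "x < z" "z < x + 1"
    and mvt: "(x + 1) powr (1 - r) - x powr (1 - r) = (1 - r) * z powr (-r)"
    by auto
  have "(x + 1) powr (-r) \<le> z powr (-r)"
    using z assms by (intro powr_mono2') auto
  then show ?thesis
    unfolding mvt using assms by (intro mult_left_mono) auto
qed

lemma sum_powr_neg_le:
  fixes r :: real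
  assumes "0 \<le> r" "r < 1"
  shows "(\<Sum>i=1..n. real i powr (-r)) \<le> real n powr (1 - r) / (1 - r)"
proof (induction n)
  case 0
  then show ?case by simp
next
  case (Suc n)
  show ?case
  proof (cases "n = 0")
    case True
    then show ?thesis using assms by (simp add: field_simps)
  next
    case False
    have "(1 - r) * real (Suc n) powr (-r) \<le> real (Suc n) powr (1 - r) - real n powr (1 - r)"
      using powr_one_minus_increment_ge[of r "real n"] assms False by (simp add: add.commute)
    then have "real (Suc n) powr (-r) \<le> (real (Suc n) powr (1 - r) - real n powr (1 - r)) / (1 - r)"
      using assms by (simp add: pos_le_divide_eq mult.commute)
    then show ?thesis
      using Suc.IH by (simp add: diff_divide_distrib)
  qed
qed

lemma summable_exp_neg_powr:
  fixes c p :: real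
  assumes "c > 0" "p > 0"
  shows "summable (\<lambda>n. exp (- c * real n powr p))"
proof (rule summable_comparison_test_bigo)
  show "summable (\<lambda>n. norm (real n powr (-2)))"
    using summable_real_powr_iff[of "-2"] by simp
  show "(\<lambda>n. exp (- c * real n powr p)) \<in> O(\<lambda>n. real n powr (-2))"
    using assms by real_asymp
qed

lemma partial_sums_exp_neg_powr_bounded:
  fixes c p :: real
  assumes "c > 0" "p > 0"
  obtains K where "K \<ge> 0" "\<And>n. (\<Sum>i=1..n. exp (- c * real i powr p)) \<le> K"
proof
  have "summable (\<lambda>i. exp (- c * real i powr p))"
    using assms by (rule summable_exp_neg_powr)
  then show "(\<Sum>i. exp (- c * real i powr p)) \<ge> 0"
    and "(\<Sum>i=1..n. exp (- c * real i powr p)) \<le> (\<Sum>i. exp (- c * real i powr p))" for n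
    by (auto intro: suminf_nonneg sum_le_suminf)
qed

lemma sample_mean_ge_imp_ex_ge:
  assumes "n \<ge> 1" "(\<Sum>i=1..n. a i) \<le> real n * t" "t \<le> sample_mean X n \<omega>"
  shows "\<exists>i\<in>{1..n}. a i \<le> X i \<omega>"
proof (rule ccontr)
  assume "\<not> ?thesis"
  then have "(\<Sum>i=1..n. X i \<omega>) < (\<Sum>i=1..n. a i)"
    using assms(1) by (intro sum_strict_mono) (auto simp: not_le)
  then have "sample_mean X n \<omega> < t"
    using assms(1,2) by (simp add: sample_mean_def divide_less_eq mult.commute)
  then show False
    using assms(3) by simp
qed

lemma sum_split_threshold_le:
  fixes \<delta> s y :: real and m n :: nat
  assumes "0 \<le> \<delta>" "\<delta> < 1" "s \<ge> 0" "y \<ge> 0"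
    and large: "s * real m powr (1 - \<delta>) \<le> real n powr (1 - \<delta>)"
  shows "(\<Sum>i=1..n. (if i \<le> m then s else 2) * real i powr (-\<delta>) * y)
           \<le> 3 * real n powr (1 - \<delta>) * y / (1 - \<delta>)"
proof -
  let ?w = "\<lambda>i. real i powr (-\<delta>)"
  have "s * (\<Sum>i\<in>{1..n} \<inter> {i. i \<le> m}. ?w i) \<le> s * (\<Sum>i=1..m. ?w i)"
    using assms by (intro mult_left_mono sum_mono2) auto
  also have "\<dots> \<le> s * (real m powr (1 - \<delta>) / (1 - \<delta>))"
    using assms by (intro mult_left_mono sum_powr_neg_le) auto
  also have "\<dots> \<le> real n powr (1 - \<delta>) / (1 - \<delta>)"
    using large assms by (simp add: divide_right_mono)
  finally have small_indices: "s * (\<Sum>i\<in>{1..n} \<inter> {i. i \<le> m}. ?w i) \<le> real n powr (1 - \<delta>) / (1 - \<delta>)" .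
  have "2 * (\<Sum>i\<in>{1..n} \<inter> - {i. i \<le> m}. ?w i) \<le> 2 * (\<Sum>i=1..n. ?w i)"
    by (intro mult_left_mono sum_mono2) auto
  also have "\<dots> \<le> 2 * (real n powr (1 - \<delta>) / (1 - \<delta>))"
    using assms by (intro mult_left_mono sum_powr_neg_le) auto
  finally have large_indices: "2 * (\<Sum>i\<in>{1..n} \<inter> - {i. i \<le> m}. ?w i) \<le> 2 * (real n powr (1 - \<delta>) / (1 - \<delta>))" .
  have "(\<Sum>i=1..n. (if i \<le> m then s else 2) * ?w i * y)
      = (s * (\<Sum>i\<in>{1..n} \<inter> {i. i \<le> m}. ?w i) + 2 * (\<Sum>i\<in>{1..n} \<inter> - {i. i \<le> m}. ?w i)) * y"
  proof -
    have "(\<Sum>i=1..n. (if i \<le> m then s else 2) * ?w i * y)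
        = (\<Sum>i=1..n. if i \<le> m then s * ?w i * y else 2 * ?w i * y)"
      by (intro sum.cong) auto
    then show ?thesis
      by (simp add: sum.If_cases sum_distrib_left sum_distrib_right algebra_simps)
  qed
  also have "\<dots> \<le> (real n powr (1 - \<delta>) / (1 - \<delta>) + 2 * (real n powr (1 - \<delta>) / (1 - \<delta>))) * y"
    using small_indices large_indices assms by (intro mult_right_mono add_mono) auto
  finally show ?thesis
    by (simp add: field_simps)
qed

lemma measure_sample_mean_ge_le_sum:
  assumes "finite_measure M" "\<And>i. X i \<in> borel_measurable M"
    and "n \<ge> 1" "(\<Sum>i=1..n. a i) \<le> real n * t"
  shows "measure M {\<omega> \<in> space M. sample_mean X n \<omega> \<ge> t}
           \<le> (\<Sum>i=1..n. measure M {\<omega> \<in> space M. X i \<omega> \<ge> a i})"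
proof -
  interpret finite_measure M by fact
  have sets: "{\<omega> \<in> space M. X i \<omega> \<ge> a i} \<in> sets M" for i
    using assms(2) by measurable
  have "{\<omega> \<in> space M. sample_mean X n \<omega> \<ge> t} \<subseteq> (\<Union>i\<in>{1..n}. {\<omega> \<in> space M. X i \<omega> \<ge> a i})"
    using sample_mean_ge_imp_ex_ge[OF assms(3,4), of X] by auto
  then have "measure M {\<omega> \<in> space M. sample_mean X n \<omega> \<ge> t}
      \<le> measure M (\<Union>i\<in>{1..n}. {\<omega> \<in> space M. X i \<omega> \<ge> a i})"
    using sets by (intro finite_measure_mono) auto
  also have "\<dots> \<le> (\<Sum>i=1..n. measure M {\<omega> \<in> space M. X i \<omega> \<ge> a i})"
    using sets by (intro finite_measure_subadditive_finite) auto
  finally show ?thesis .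
qed

lemma mult_threshold_powr_eq:
  fixes a x y \<gamma> \<delta> :: real
  assumes "a \<ge> 0" "x > 0" "y \<ge> 0"
  shows "x * (a * x powr (-\<delta>) * y) powr \<gamma> = a powr \<gamma> * x powr (1 - \<gamma> * \<delta>) * y powr \<gamma>"
proof -
  have "x * (a * x powr (-\<delta>) * y) powr \<gamma> = a powr \<gamma> * (x * x powr (-(\<gamma> * \<delta>))) * y powr \<gamma>"
    using assms by (simp add: powr_mult powr_powr mult_ac)
  also have "x * x powr (-(\<gamma> * \<delta>)) = x powr (1 - \<gamma> * \<delta>)"
    using powr_mult_base[of x "-(\<gamma> * \<delta>)"] assms by simp
  finally show ?thesis .
qed

lemma sum_if_le_le:
  fixes e :: "nat \<Rightarrow> real"
  assumes "\<And>i. e i \<ge> 0"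
  shows "(\<Sum>i=1..n. if i \<le> m then 1 else e i) \<le> real m + (\<Sum>i=1..n. e i)"
proof -
  have "card ({1..n} \<inter> {i. i \<le> m}) \<le> card {1..m}"
    by (intro card_mono) auto
  moreover have "(\<Sum>i\<in>{1..n} \<inter> - {i. i \<le> m}. e i) \<le> (\<Sum>i=1..n. e i)"
    using assms by (intro sum_mono2) auto
  ultimately show ?thesis
    by (simp add: sum.If_cases)
qed

lemma exp_split_threshold_le:
  fixes C2 \<gamma> \<delta> s T y :: real and i m :: nat
  assumes "C2 > 0" "\<gamma> > 0" "\<gamma> * \<delta> \<le> 1" "y \<ge> 1" "s \<ge> 0" "s powr \<gamma> = T" "i \<ge> 1"
    and large: "m < i \<Longrightarrow> T \<le> real i powr (1 - \<gamma> * \<delta>)"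
  shows "exp (- C2 * real i * ((if i \<le> m then s else 2) * real i powr (-\<delta>) * y) powr \<gamma>)
           \<le> exp (- C2 * T * y powr \<gamma>)
             * (if i \<le> m then 1 else exp (- C2 * (2 powr \<gamma> - 1) * real i powr (1 - \<gamma> * \<delta>)))"
proof -
  define p where "p = 1 - \<gamma> * \<delta>"
  define c where "c = C2 * (2 powr \<gamma> - 1)"
  define a where "a = (if i \<le> m then s else 2)"
  have "c > 0"
    using assms powr_less_mono[of 0 \<gamma> 2] by (simp add: c_def)
  have "y powr \<gamma> \<ge> 1" "real i powr p \<ge> 1"
    using assms by (simp_all add: p_def ge_one_powr_ge_zero)
  have "a \<ge> 0"
    using assms by (simp add: a_def)
  then have exponent: "real i * (a * real i powr (-\<delta>) * y) powr \<gamma> = a powr \<gamma> * real i powr p * y powr \<gamma>"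
    using mult_threshold_powr_eq[where x = "real i"] assms by (simp add: p_def)
  have "C2 * T * y powr \<gamma> + (if i \<le> m then 0 else c * real i powr p)
      \<le> C2 * (a powr \<gamma> * real i powr p * y powr \<gamma>)"
  proof (cases "i \<le> m")
    case True
    have "T * y powr \<gamma> * 1 \<le> T * y powr \<gamma> * real i powr p"
      using \<open>real i powr p \<ge> 1\<close> assms by (intro mult_left_mono) auto
    then show ?thesis
      using True \<open>C2 > 0\<close> \<open>s powr \<gamma> = T\<close> by (simp add: a_def mult_ac)
  next
    case False
    then have "C2 * T * y powr \<gamma> \<le> C2 * real i powr p * y powr \<gamma>"
      using large \<open>C2 > 0\<close> \<open>y powr \<gamma> \<ge> 1\<close> by (simp add: p_def mult_right_mono)
    moreover have "c * real i powr p * 1 \<le> c * real i powr p * y powr \<gamma>"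
      using \<open>y powr \<gamma> \<ge> 1\<close> \<open>c > 0\<close> by (intro mult_left_mono) auto
    ultimately show ?thesis
      using False by (simp add: a_def c_def algebra_simps)
  qed
  then show ?thesis
    unfolding a_def[symmetric] mult.assoc[of "- C2"] exponent
    by (auto simp: c_def p_def exp_add[symmetric])
qed

lemma sum_exp_split_threshold_le:
  fixes C2 \<gamma> \<delta> s T N y K :: real and m n :: nat
  assumes "C2 > 0" "\<gamma> > 0" "\<gamma> * \<delta> \<le> 1" "y \<ge> 1" "s \<ge> 0" "s powr \<gamma> = T"
    and "real m \<le> N" "N \<ge> 1"
    and "\<And>i. m < i \<Longrightarrow> T \<le> real i powr (1 - \<gamma> * \<delta>)"
    and K: "(\<Sum>i=1..n. exp (- C2 * (2 powr \<gamma> - 1) * real i powr (1 - \<gamma> * \<delta>))) \<le> K"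
  shows "(\<Sum>i=1..n. exp (- C2 * real i * ((if i \<le> m then s else 2) * real i powr (-\<delta>) * y) powr \<gamma>))
           \<le> (1 + K) * N * exp (- C2 * T * y powr \<gamma>)"
proof -
  define e where "e i = exp (- C2 * (2 powr \<gamma> - 1) * real i powr (1 - \<gamma> * \<delta>))" for i :: nat
  define E where "E = exp (- C2 * T * y powr \<gamma>)"
  have "K \<ge> 0"
    using K order_trans[OF sum_nonneg K] by auto
  have "(\<Sum>i=1..n. exp (- C2 * real i * ((if i \<le> m then s else 2) * real i powr (-\<delta>) * y) powr \<gamma>))
      \<le> E * (\<Sum>i=1..n. if i \<le> m then 1 else e i)"
    unfolding sum_distrib_left E_def e_def
    using exp_split_threshold_le[OF assms(1-6)] assms(9) by (intro sum_mono) auto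
  also have "\<dots> \<le> E * (real m + K)"
    using sum_if_le_le[where e = e and n = n and m = m] K
    by (intro mult_left_mono) (auto simp: E_def e_def)
  also have "\<dots> \<le> E * ((1 + K) * N)"
    using assms(7,8) mult_left_mono[OF assms(8) \<open>K \<ge> 0\<close>]
    by (intro mult_left_mono) (auto simp: E_def algebra_simps)
  finally show ?thesis
    by (simp add: E_def mult_ac)
qed

lemma sample_mean_tail_bound:
  fixes C0 C1 C2 \<beta> \<gamma> \<delta> y K :: real and n :: nat
    and M :: "'a measure" and X :: "nat \<Rightarrow> 'a \<Rightarrow> real"
  assumes "C0 \<ge> 0" "C1 \<ge> 0" "C2 > 0" "0 \<le> \<beta>" "\<beta> < 1"
    and "0 < \<gamma>" "0 < \<delta>" "\<delta> < 1" "\<gamma> * \<delta> < 1"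
    and "prob_space M" and "\<And>i. X i \<in> borel_measurable M"
    and tail: "\<And>i x. i \<ge> 1 \<Longrightarrow> x > 0 \<Longrightarrow>
      measure M {\<omega> \<in> space M. X i \<omega> \<ge> C0 * real i powr (-\<beta>) + x}
        \<le> C1 * exp (- C2 * real i * x powr \<gamma>)"
    and "n \<ge> 1" "y \<ge> 1"
    and K: "(\<Sum>i=1..n. exp (- C2 * (2 powr \<gamma> - 1) * real i powr (1 - \<gamma> * \<delta>))) \<le> K"
  defines "\<alpha> \<equiv> \<gamma> * (1 - \<delta>) / (\<gamma> * (1 - \<delta>) + (1 - \<gamma> * \<delta>))"
  shows "measure M {\<omega> \<in> space M.
           sample_mean X n \<omega> \<ge> C0 / (1 - \<beta>) * real n powr (-\<beta>)
                               + 3 / (1 - \<delta>) * real n powr (-\<delta>) * y}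
    \<le> C1 * (1 + K) * real n powr \<alpha> * exp (- C2 * real n powr (\<alpha> * (1 - \<gamma> * \<delta>)) * y powr \<gamma>)"
proof -
  define p q where "p = 1 - \<gamma> * \<delta>" and "q = 1 - \<delta>"
  define m where "m = nat \<lfloor>real n powr \<alpha>\<rfloor>"
  define s where "s = real n powr (\<alpha> * p / \<gamma>)"
  define x where "x i = (if i \<le> m then s else 2) * real i powr (-\<delta>) * y" for i
  have "p > 0" "q > 0" "\<gamma> * q > 0"
    using assms by (simp_all add: p_def q_def)
  then have "\<alpha> > 0" and \<alpha>_eq: "\<alpha> * (\<gamma> * q + p) = \<gamma> * q"
    by (simp_all add: \<alpha>_def p_def[symmetric] q_def[symmetric])
  have "real n powr \<alpha> \<ge> 1"
    using \<open>n \<ge> 1\<close> \<open>\<alpha> > 0\<close> by (simp add: ge_one_powr_ge_zero)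
  then have m_le: "real m \<le> real n powr \<alpha>" and m_gt: "real n powr \<alpha> < real m + 1"
    by (simp_all add: m_def)
  have "s \<ge> 1"
    using \<open>n \<ge> 1\<close> \<open>p > 0\<close> \<open>\<alpha> > 0\<close> \<open>0 < \<gamma>\<close> by (simp add: s_def ge_one_powr_ge_zero)
  have "s * real m powr q \<le> real n powr (\<alpha> * p / \<gamma>) * (real n powr \<alpha>) powr q"
    using m_le \<open>q > 0\<close> \<open>s \<ge> 1\<close> by (auto simp: s_def intro!: mult_left_mono powr_mono2)
  also have "\<dots> = real n powr q"
    using \<alpha>_eq \<open>0 < \<gamma>\<close> by (simp add: powr_powr powr_add[symmetric] field_simps)
  finally have "(\<Sum>i=1..n. x i) \<le> 3 * real n powr q * y / q"
    unfolding x_def q_def using sum_split_threshold_le[of \<delta> s y m n] assms \<open>s \<ge> 1\<close> by simp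
  then have "(\<Sum>i=1..n. C0 * real i powr (-\<beta>) + x i)
      \<le> C0 * (real n powr (1 - \<beta>) / (1 - \<beta>)) + 3 * real n powr q * y / q"
    unfolding sum.distrib sum_distrib_left[symmetric]
    using sum_powr_neg_le[of \<beta> n] assms by (intro add_mono mult_left_mono) auto
  also have "\<dots> = real n * (C0 / (1 - \<beta>) * real n powr (-\<beta>) + 3 / (1 - \<delta>) * real n powr (-\<delta>) * y)"
    using powr_mult_base[of "real n" "-\<beta>"] powr_mult_base[of "real n" "-\<delta>"]
    by (simp add: q_def field_simps)
  finally have "measure M {\<omega> \<in> space M.
           sample_mean X n \<omega> \<ge> C0 / (1 - \<beta>) * real n powr (-\<beta>)
                               + 3 / (1 - \<delta>) * real n powr (-\<delta>) * y}
      \<le> (\<Sum>i=1..n. measure M {\<omega> \<in> space M. X i \<omega> \<ge> C0 * real i powr (-\<beta>) + x i})"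
    using assms by (intro measure_sample_mean_ge_le_sum) (auto simp: prob_space_def)
  also have "\<dots> \<le> C1 * (\<Sum>i=1..n. exp (- C2 * real i * x i powr \<gamma>))"
    unfolding sum_distrib_left using \<open>s \<ge> 1\<close> \<open>y \<ge> 1\<close>
    by (intro sum_mono tail) (auto simp: x_def)
  also have "\<dots> \<le> C1 * ((1 + K) * real n powr \<alpha> * exp (- C2 * real n powr (\<alpha> * p) * y powr \<gamma>))"
    unfolding x_def
  proof (intro mult_left_mono sum_exp_split_threshold_le)
    show "s powr \<gamma> = real n powr (\<alpha> * p)"
      using \<open>0 < \<gamma>\<close> by (simp add: s_def powr_powr)
    show "real n powr (\<alpha> * p) \<le> real i powr (1 - \<gamma> * \<delta>)" if "m < i" for i
      using m_gt that \<open>p > 0\<close> by (simp add: p_def powr_powr[symmetric] powr_mono2)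
  qed (use assms m_le \<open>s \<ge> 1\<close> \<open>real n powr \<alpha> \<ge> 1\<close> in auto)
  finally show ?thesis
    by (simp add: p_def mult_ac)
qed

theorem proposition4:
  fixes C0 C1 C2 \<beta> \<gamma> \<delta> :: real
  assumes "C0 \<ge> 0" and "C1 > 0" and "C2 > 0"
    and "0 < \<beta>" and "\<beta> < 1"
    and "0 < \<gamma>" and "\<gamma> < 1 / \<beta>"
    and "\<beta> < \<delta>" and "\<delta> < min (1 / \<gamma>) 1"
  defines "\<alpha> \<equiv> \<gamma> * (1 - \<delta>) / (\<gamma> * (1 - \<delta>) + (1 - \<gamma> * \<delta>))"
  shows "\<exists>C4 > 0. \<forall>(M :: 'a measure) (X :: nat \<Rightarrow> 'a \<Rightarrow> real).
           prob_space M \<and> (\<forall>i. X i \<in> borel_measurable M) \<and>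
           (\<forall>n \<ge> 1. \<forall>x > 0.
              measure M {\<omega> \<in> space M. X n \<omega> \<ge> C0 * real n powr (-\<beta>) + x}
                \<le> C1 * exp (- C2 * real n * x powr \<gamma>))
           \<longrightarrow> (\<forall>n \<ge> 1. \<forall>y \<ge> 1.
              measure M {\<omega> \<in> space M.
                 sample_mean X n \<omega> \<ge> C0 / (1 - \<beta>) * real n powr (-\<beta>)
                                     + 3 / (1 - \<delta>) * real n powr (-\<delta>) * y}
                \<le> C4 * real n powr \<alpha> * exp (- C2 * real n powr (\<alpha> * (1 - \<gamma> * \<delta>)) * y powr \<gamma>))"
proof -
  have "\<gamma> * \<delta> < 1"
    using assms by (simp add: field_simps)
  moreover have "C2 * (2 powr \<gamma> - 1) > 0"
    using assms powr_less_mono[of 0 \<gamma> 2] by simp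
  ultimately obtain K where "K \<ge> 0"
    and "\<And>n. (\<Sum>i=1..n. exp (- (C2 * (2 powr \<gamma> - 1)) * real i powr (1 - \<gamma> * \<delta>))) \<le> K"
    using partial_sums_exp_neg_powr_bounded[of _ "1 - \<gamma> * \<delta>"] by auto
  then show ?thesis
    using assms \<open>\<gamma> * \<delta> < 1\<close> unfolding \<alpha>_def
    by (intro exI[of _ "C1 * (1 + K)"] conjI allI impI sample_mean_tail_bound) auto
qed

end
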